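(* Assume in addition that $\lambda_A>0$ and that the dataset is balanced, i.e. $s_{N+1}=s_1$. Let $\alpha=1/8$ and let $M$ be a positive integer with $M\ge 16/\lambda_A$ (the paper takes $M=16/\lambda_A$). Then the iterates of TD-SVRG (Algorithm 1) satisfy, for every $m\ge0$, $$\mathbb E[f_d(\tilde\theta_m)]\le\left(\tfrac23\right)^m f_d(\tilde\theta_0).$$
   Context: Finite-sample setting. Let $\mathcal S$ be a finite state space, $\phi:\mathcal S\to\mathbb R^d$ a feature map with $\|\phi(s)\|_2\le 1$ for all $s$, $r:\mathcal S\times\mathcal S\to\mathbb R$ a reward function and $\gamma\in[0,1)$. For a pair of states $(s,s')$ and $\theta\in\mathbb R^d$ let $g_{s,s'}(\theta)=(r(s,s')+\gamma\phi(s')^T\theta-\phi(s)^T\theta)\phi(s)$. A dataset is a state trajectory $s_1,\dots,s_{N+1}$, giving the $N$ pairs $(s_t,s_{t+1})$, $t=1,\dots,N$. Let $A_d=\frac1N\sum_{t=1}^N\phi(s_t)(\phi(s_t)-\gamma\phi(s_{t+1}))^T$ and $b_d=\frac1N\sum_{t=1}^N r(s_t,s_{t+1})\phi(s_t)$, so that $\bar g(\theta):=\frac1N\sum_{t=1}^N g_{s_t,s_{t+1}}(\theta)=-A_d\theta+b_d$. Assume $A_d$ is nonsingular and let $\theta^*=A_d^{-1}b_d$. Let $\lambda_A$ denote the minimum eigenvalue of $(A_d+A_d^T)/2$. Define $f_d(\theta)=(\theta-\theta^* )^TA_d(\theta-\theta^* )$. Algorithm 1 (TD-SVRG): given $\alpha>0$,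 an integer $M\ge1$ and an initial $\tilde\theta_0\in\mathbb R^d$, for epochs $m=1,2,\dots$: set $\tilde\theta=\tilde\theta_{m-1}$, compute $\bar g(\tilde\theta)$, set $\theta_0=\tilde\theta$; for $t=1,\dots,M$ draw an index $i_t$ uniformly from $\{1,\dots,N\}$, independently of everything else, put $(s,s')=(s_{i_t},s_{i_t+1})$, $v_t=g_{s,s'}(\theta_{t-1})-g_{s,s'}(\tilde\theta)+\bar g(\tilde\theta)$ and $\theta_t=\theta_{t-1}+\alpha v_t$; finally set $\tilde\theta_m=\theta_{t'}$ where $t'$ is drawn uniformly from $\{0,\dots,M-1\}$ independently of everything else. *)

theory Defs
  imports "HOL-Analysis.Analysis" "HOL-Probability.Probability"
begin

text \<open>TD-SVRG setting. States have type 's, features live in real^'d.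
  The trajectory is s :: nat => 's, used at indices 1..N+1; the pairs are (s t, s (t+1)), t = 1..N.\<close>

definition outer_prod :: "real^'d \<Rightarrow> real^'d \<Rightarrow> real^'d^'d" where
  "outer_prod u v = (\<chi> i j. u $ i * v $ j)"

definition td_g :: "('s \<Rightarrow> real^'d) \<Rightarrow> ('s \<Rightarrow> 's \<Rightarrow> real) \<Rightarrow> real \<Rightarrow> 's \<Rightarrow> 's \<Rightarrow> real^'d \<Rightarrow> real^'d" where
  "td_g \<phi> r \<gamma> x x' \<theta> = (r x x' + \<gamma> * (\<phi> x' \<bullet> \<theta>) - \<phi> x \<bullet> \<theta>) *\<^sub>R \<phi> x"

definition A_d :: "('s \<Rightarrow> real^'d) \<Rightarrow> real \<Rightarrow> (nat \<Rightarrow> 's) \<Rightarrow> nat \<Rightarrow> real^'d^'d" where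
  "A_d \<phi> \<gamma> s N = (1 / real N) *\<^sub>R (\<Sum>t=1..N. outer_prod (\<phi> (s t)) (\<phi> (s t) - \<gamma> *\<^sub>R \<phi> (s (t+1))))"

definition b_d :: "('s \<Rightarrow> real^'d) \<Rightarrow> ('s \<Rightarrow> 's \<Rightarrow> real) \<Rightarrow> (nat \<Rightarrow> 's) \<Rightarrow> nat \<Rightarrow> real^'d" where
  "b_d \<phi> r s N = (1 / real N) *\<^sub>R (\<Sum>t=1..N. r (s t) (s (t+1)) *\<^sub>R \<phi> (s t))"

definition g_bar :: "('s \<Rightarrow> real^'d) \<Rightarrow> ('s \<Rightarrow> 's \<Rightarrow> real) \<Rightarrow> real \<Rightarrow> (nat \<Rightarrow> 's) \<Rightarrow> nat \<Rightarrow> real^'d \<Rightarrow> real^'d" where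
  "g_bar \<phi> r \<gamma> s N \<theta> = (1 / real N) *\<^sub>R (\<Sum>t=1..N. td_g \<phi> r \<gamma> (s t) (s (t+1)) \<theta>)"

definition theta_star :: "('s \<Rightarrow> real^'d) \<Rightarrow> ('s \<Rightarrow> 's \<Rightarrow> real) \<Rightarrow> real \<Rightarrow> (nat \<Rightarrow> 's) \<Rightarrow> nat \<Rightarrow> real^'d" where
  "theta_star \<phi> r \<gamma> s N = matrix_inv (A_d \<phi> \<gamma> s N) *v b_d \<phi> r s N"

definition lambda_A :: "real^'d^'d \<Rightarrow> real" where
  "lambda_A A = Min {l. \<exists>v. v \<noteq> 0 \<and> ((1/2) *\<^sub>R (A + transpose A)) *v v = l *\<^sub>R v}"

definition f_d :: "('s \<Rightarrow> real^'d) \<Rightarrow> ('s \<Rightarrow> 's \<Rightarrow> real) \<Rightarrow> real \<Rightarrow> (nat \<Rightarrow> 's) \<Rightarrow> nat \<Rightarrow> real^'d \<Rightarrow> real" where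
  "f_d \<phi> r \<gamma> s N \<theta> = (\<theta> - theta_star \<phi> r \<gamma> s N) \<bullet> (A_d \<phi> \<gamma> s N *v (\<theta> - theta_star \<phi> r \<gamma> s N))"

text \<open>One inner step of TD-SVRG with anchor \<open>tt\<close> (the current \<open>\<tilde>\<theta>\<close>): distribution of
  \<open>\<theta>_t\<close> given \<open>\<theta>_{t-1} = \<theta>\<close>, with \<open>i_t\<close> uniform on {1..N}.\<close>
definition svrg_step :: "('s \<Rightarrow> real^'d) \<Rightarrow> ('s \<Rightarrow> 's \<Rightarrow> real) \<Rightarrow> real \<Rightarrow> (nat \<Rightarrow> 's) \<Rightarrow> nat \<Rightarrow> real
    \<Rightarrow> real^'d \<Rightarrow> real^'d \<Rightarrow> (real^'d) pmf" where
  "svrg_step \<phi> r \<gamma> s N \<alpha> tt \<theta> =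
     map_pmf (\<lambda>i. \<theta> + \<alpha> *\<^sub>R (td_g \<phi> r \<gamma> (s i) (s (i+1)) \<theta> - td_g \<phi> r \<gamma> (s i) (s (i+1)) tt
                                 + g_bar \<phi> r \<gamma> s N tt))
       (pmf_of_set {1..N})"

fun inner_dist :: "('s \<Rightarrow> real^'d) \<Rightarrow> ('s \<Rightarrow> 's \<Rightarrow> real) \<Rightarrow> real \<Rightarrow> (nat \<Rightarrow> 's) \<Rightarrow> nat \<Rightarrow> real
    \<Rightarrow> real^'d \<Rightarrow> nat \<Rightarrow> (real^'d) pmf" where
  "inner_dist \<phi> r \<gamma> s N \<alpha> tt 0 = return_pmf tt"
| "inner_dist \<phi> r \<gamma> s N \<alpha> tt (Suc t) = bind_pmf (inner_dist \<phi> r \<gamma> s N \<alpha> tt t) (svrg_step \<phi> r \<gamma> s N \<alpha> tt)"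

text \<open>One epoch: output \<open>\<theta>_{t'}\<close> with \<open>t'\<close> uniform on {0..M-1}, independent of the inner iterates.\<close>
definition svrg_epoch :: "('s \<Rightarrow> real^'d) \<Rightarrow> ('s \<Rightarrow> 's \<Rightarrow> real) \<Rightarrow> real \<Rightarrow> (nat \<Rightarrow> 's) \<Rightarrow> nat \<Rightarrow> real
    \<Rightarrow> nat \<Rightarrow> real^'d \<Rightarrow> (real^'d) pmf" where
  "svrg_epoch \<phi> r \<gamma> s N \<alpha> M tt = bind_pmf (pmf_of_set {0..<M}) (inner_dist \<phi> r \<gamma> s N \<alpha> tt)"

fun td_svrg :: "('s \<Rightarrow> real^'d) \<Rightarrow> ('s \<Rightarrow> 's \<Rightarrow> real) \<Rightarrow> real \<Rightarrow> (nat \<Rightarrow> 's) \<Rightarrow> nat \<Rightarrow> real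
    \<Rightarrow> nat \<Rightarrow> real^'d \<Rightarrow> nat \<Rightarrow> (real^'d) pmf" where
  "td_svrg \<phi> r \<gamma> s N \<alpha> M th0 0 = return_pmf th0"
| "td_svrg \<phi> r \<gamma> s N \<alpha> M th0 (Suc m) = bind_pmf (td_svrg \<phi> r \<gamma> s N \<alpha> M th0 m) (svrg_epoch \<phi> r \<gamma> s N \<alpha> M)"

end

theory Submission
  imports Defs
begin

text \<open>Write \<open>\<psi>\<^sub>t = \<phi>(s\<^sub>t) - \<gamma> \<phi>(s\<^sub>t\<^sub>+\<^sub>1)\<close>. Because the trajectory is closed,
  \<open>\<Sum>\<^sub>t (\<phi>(s\<^sub>t\<^sub>+\<^sub>1)\<cdot>y)\<^sup>2 = \<Sum>\<^sub>t (\<phi>(s\<^sub>t)\<cdot>y)\<^sup>2\<close>, and with \<open>\<gamma>\<^sup>2 \<le> 1\<close> this gives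
  \<open>\<Sum>\<^sub>t (\<psi>\<^sub>t\<cdot>y)\<^sup>2 \<le> 2N y\<^sup>TA\<^sub>dy\<close>. Hence the correction term of an SVRG step, which has
  mean zero, and the TD term both have second moment at most \<open>2 f\<^sub>d\<close> of the respective
  point, so with \<open>\<alpha> = 1/8\<close> one inner step decreases \<open>E\<parallel>\<theta>\<^sub>t - \<theta>\<^sup>*\<parallel>\<^sup>2\<close> by at least
  \<open>(3/16) f\<^sub>d(\<theta>\<^sub>t\<^sub>-\<^sub>1) - (1/16) f\<^sub>d(\<tilde>\<theta>)\<close>. Summing over an epoch and averaging gives
  \<open>(3/16) M E f\<^sub>d(\<tilde>\<theta>\<^sub>m) \<le> \<parallel>\<tilde>\<theta> - \<theta>\<^sup>*\<parallel>\<^sup>2 + (M/16) f\<^sub>d(\<tilde>\<theta>)\<close>, and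
  \<open>\<lambda>\<^sub>A \<parallel>\<tilde>\<theta> - \<theta>\<^sup>*\<parallel>\<^sup>2 \<le> f\<^sub>d(\<tilde>\<theta>)\<close> with \<open>M \<lambda>\<^sub>A \<ge> 16\<close> turns this into the contraction
  factor \<open>2/3\<close> per epoch.\<close>

lemma outer_prod_mult_vec: "outer_prod u v *v y = (v \<bullet> y) *\<^sub>R u"
  by (simp add: outer_prod_def matrix_vector_mult_def inner_vec_def vec_eq_iff
      sum_distrib_left mult_ac)

lemma sum_matrix_mult_vec: "(\<Sum>t\<in>T. (M t :: real^'n^'m)) *v y = (\<Sum>t\<in>T. M t *v y)"
  by (induct T rule: infinite_finite_induct) (auto simp: matrix_vector_mult_add_rdistrib)

lemma matrix_inv_right: "invertible A \<Longrightarrow> A ** matrix_inv A = mat 1"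
  unfolding invertible_def matrix_inv_def by (rule someI2_ex) auto

lemma A_d_mult_vec:
  "A_d \<phi> \<gamma> s N *v y
     = (1 / real N) *\<^sub>R (\<Sum>t=1..N. ((\<phi> (s t) - \<gamma> *\<^sub>R \<phi> (s (t+1))) \<bullet> y) *\<^sub>R \<phi> (s t))"
  by (simp add: A_d_def scaleR_matrix_vector_assoc[symmetric] sum_matrix_mult_vec outer_prod_mult_vec)

lemma td_g_eq: "td_g \<phi> r \<gamma> x x' \<theta> = r x x' *\<^sub>R \<phi> x - ((\<phi> x - \<gamma> *\<^sub>R \<phi> x') \<bullet> \<theta>) *\<^sub>R \<phi> x"
  by (simp add: td_g_def algebra_simps)

lemma g_bar_eq: "g_bar \<phi> r \<gamma> s N \<theta> = b_d \<phi> r s N - A_d \<phi> \<gamma> s N *v \<theta>"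
  by (simp add: g_bar_def b_d_def A_d_mult_vec td_g_eq sum_subtractf scaleR_diff_right)

lemma A_d_theta_star:
  "invertible (A_d \<phi> \<gamma> s N) \<Longrightarrow> A_d \<phi> \<gamma> s N *v theta_star \<phi> r \<gamma> s N = b_d \<phi> r s N"
  by (simp add: theta_star_def matrix_vector_mul_assoc matrix_inv_right)

lemma sum_cyclic_shift:
  fixes a :: "nat \<Rightarrow> 'a::ab_group_add"
  assumes "a (N+1) = a 1"
  shows "(\<Sum>t=1..N. a (t+1)) = (\<Sum>t=1..N. a t)"
proof -
  have "(\<Sum>t=1..N. a (t+1)) = (\<Sum>t=Suc 1..Suc N. a t)"
    by (subst sum.shift_bounds_cl_Suc_ivl) simp
  also have "\<dots> = (\<Sum>t=1..Suc N. a t) - a 1"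
    by (simp add: sum.atLeast_Suc_atMost)
  also have "\<dots> = (\<Sum>t=1..N. a t)"
    using assms by simp
  finally show ?thesis .
qed

lemma cyclic_td_square_sum_le:
  fixes a :: "nat \<Rightarrow> real"
  assumes "a (N+1) = a 1" and "\<bar>\<gamma>\<bar> \<le> 1"
  shows "(\<Sum>t=1..N. (a t - \<gamma> * a (t+1))^2) \<le> 2 * (\<Sum>t=1..N. (a t - \<gamma> * a (t+1)) * a t)"
proof -
  let ?S = "\<Sum>t=1..N. (a t)^2" and ?X = "\<Sum>t=1..N. a t * a (t+1)"
  have shift: "(\<Sum>t=1..N. (a (t+1))^2) = ?S"
    using sum_cyclic_shift[of "\<lambda>t. (a t)^2"] assms(1) by simp
  have lhs: "(\<Sum>t=1..N. (a t - \<gamma> * a (t+1))^2) = ?S - 2*\<gamma>*?X + \<gamma>^2 * (\<Sum>t=1..N. (a (t+1))^2)"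
    by (simp add: power2_eq_square algebra_simps sum.distrib sum_subtractf sum_distrib_left)
  have rhs: "(\<Sum>t=1..N. (a t - \<gamma> * a (t+1)) * a t) = ?S - \<gamma> * ?X"
    by (simp add: power2_eq_square algebra_simps sum.distrib sum_subtractf sum_distrib_left)
  have "\<gamma>^2 * ?S \<le> ?S"
    using assms(2) by (intro mult_left_le_one_le sum_nonneg) (auto simp: abs_square_le_1)
  then show ?thesis unfolding lhs rhs shift by (simp add: right_diff_distrib)
qed

definition real_eigenvalues :: "real^'n^'n \<Rightarrow> real set" where
  "real_eigenvalues S = {l. \<exists>v. v \<noteq> 0 \<and> S *v v = l *\<^sub>R v}"

lemma symmetric_matrix_inner_commute:
  fixes S :: "real^'n^'n"
  assumes "transpose S = S"
  shows "y \<bullet> (S *v z) = z \<bullet> (S *v y)"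
proof -
  have "y \<bullet> (S *v z) = (y v* S) \<bullet> z"
    by (simp add: dot_lmul_matrix)
  also have "\<dots> = (transpose S *v y) \<bullet> z"
    by simp
  finally show ?thesis
    using assms by (simp add: inner_commute)
qed

lemma finite_real_eigenvalues:
  fixes S :: "real^'n^'n"
  assumes sym: "transpose S = S"
  shows "finite (real_eigenvalues S)"
proof -
  let ?E = "real_eigenvalues S"
  define ev where "ev l = (SOME v. v \<noteq> 0 \<and> S *v v = l *\<^sub>R v)" for l
  have ev: "ev l \<noteq> 0 \<and> S *v ev l = l *\<^sub>R ev l" if "l \<in> ?E" for l
    using that unfolding real_eigenvalues_def ev_def by (metis (mono_tags, lifting) mem_Collect_eq)
  have inj: "inj_on ev ?E"
  proof (rule inj_onI)
    fix l1 l2 assume l: "l1 \<in> ?E" "l2 \<in> ?E" "ev l1 = ev l2"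
    then have "l1 *\<^sub>R ev l1 = l2 *\<^sub>R ev l1" using ev[of l1] ev[of l2] by metis
    then show "l1 = l2" using ev[OF l(1)] by simp
  qed
  have "pairwise orthogonal (ev ` ?E)"
  proof (clarsimp simp: pairwise_def)
    fix l1 l2 assume l: "l1 \<in> ?E" "l2 \<in> ?E" "ev l1 \<noteq> ev l2"
    have "l1 * (ev l1 \<bullet> ev l2) = ev l2 \<bullet> (S *v ev l1)"
      using ev[OF l(1)] by (simp add: inner_commute)
    also have "\<dots> = ev l1 \<bullet> (S *v ev l2)"
      by (rule symmetric_matrix_inner_commute[OF sym])
    also have "\<dots> = l2 * (ev l1 \<bullet> ev l2)"
      using ev[OF l(2)] by simp
    finally have "(l1 - l2) * (ev l1 \<bullet> ev l2) = 0"
      by (simp add: algebra_simps)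
    then show "orthogonal (ev l1) (ev l2)"
      using l(3) by (auto simp: orthogonal_def)
  qed
  moreover have "0 \<notin> ev ` ?E"
    using ev by auto
  ultimately have "independent (ev ` ?E)"
    by (rule pairwise_orthogonal_independent)
  then have "finite (ev ` ?E)"
    using independent_bound by blast
  then show ?thesis
    using inj finite_imageD by blast
qed

lemma quadratic_form_min_attained:
  fixes S :: "real^'n^'n"
  obtains v where "norm v = 1" and "\<And>y. (v \<bullet> (S *v v)) * (norm y)^2 \<le> y \<bullet> (S *v y)"
proof -
  have "sphere (0::real^'n) 1 \<noteq> {}"
    using vector_choose_size[of 1] by auto
  moreover have "continuous_on (sphere 0 1) (\<lambda>y::real^'n. y \<bullet> (S *v y))"
    by (intro continuous_intros)
  ultimately obtain v where v: "v \<in> sphere 0 1"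
    and vmin: "\<And>y. y \<in> sphere 0 1 \<Longrightarrow> v \<bullet> (S *v v) \<le> y \<bullet> (S *v y)"
    using continuous_attains_inf[OF compact_sphere] by blast
  have "(v \<bullet> (S *v v)) * (norm y)^2 \<le> y \<bullet> (S *v y)" for y
  proof (cases "y = 0")
    case False
    then have "v \<bullet> (S *v v) \<le> ((1 / norm y) *\<^sub>R y) \<bullet> (S *v ((1 / norm y) *\<^sub>R y))"
      by (intro vmin) simp
    also have "\<dots> = (y \<bullet> (S *v y)) / (norm y)^2"
      by (simp add: matrix_vector_mult_scaleR power2_eq_square)
    finally show ?thesis
      using False by (simp add: field_simps)
  qed simp
  moreover have "norm v = 1"
    using v by simp
  ultimately show ?thesis
    using that by blast
qed

lemma linear_coeff_zero_if_quadratic_nonneg: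
  fixes k Q :: real
  assumes "0 \<le> Q" and nonneg: "\<And>t. 0 \<le> 2*t*k + t^2*Q"
  shows "k = 0"
proof -
  define t where "t = - k / (Q + 1)"
  have tQ: "t * (Q + 1) = - k"
    using \<open>0 \<le> Q\<close> by (simp add: t_def)
  have "0 \<le> (Q+1)^2 * (2*t*k + t^2*Q)"
    using nonneg[of t] by simp
  also have "\<dots> = 2*k*(Q+1)*(t*(Q+1)) + (t*(Q+1))^2*Q"
    by (simp add: power2_eq_square algebra_simps)
  also have "\<dots> = - (k^2 * (Q + 2))"
    unfolding tQ by (simp add: power2_eq_square algebra_simps)
  finally show ?thesis
    using \<open>0 \<le> Q\<close> by (simp add: mult_le_0_iff)
qed

lemma quadratic_form_minimizer_eigenvector:
  fixes S :: "real^'n^'n"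
  assumes sym: "transpose S = S" and v: "norm v = 1"
    and min: "\<And>y. (v \<bullet> (S *v v)) * (norm y)^2 \<le> y \<bullet> (S *v y)"
  shows "S *v v = (v \<bullet> (S *v v)) *\<^sub>R v"
proof -
  define \<mu> where "\<mu> = v \<bullet> (S *v v)"
  define w where "w = S *v v - \<mu> *\<^sub>R v"
  define Q where "Q = w \<bullet> (S *v w) - \<mu> * (norm w)^2"
  have vw: "v \<bullet> (S *v w) = w \<bullet> (S *v v)"
    by (rule symmetric_matrix_inner_commute[OF sym])
  have ww: "w \<bullet> w = w \<bullet> (S *v v) - \<mu> * (v \<bullet> w)"
    by (metis inner_commute inner_diff_right inner_scaleR_right w_def)
  \<comment> \<open>expand the minimality of \<open>v\<close> along the line \<open>v + t w\<close>\<close>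
  have "w \<bullet> w = 0"
  proof (rule linear_coeff_zero_if_quadratic_nonneg)
    show "0 \<le> Q"
      using min[of w] by (simp add: Q_def \<mu>_def)
    fix t :: real
    have "0 \<le> (v + t *\<^sub>R w) \<bullet> (S *v (v + t *\<^sub>R w)) - \<mu> * (norm (v + t *\<^sub>R w))^2"
      using min[of "v + t *\<^sub>R w"] by (simp add: \<mu>_def)
    also have "(v + t *\<^sub>R w) \<bullet> (S *v (v + t *\<^sub>R w))
        = v \<bullet> (S *v v) + t * (v \<bullet> (S *v w)) + t * (w \<bullet> (S *v v)) + t^2 * (w \<bullet> (S *v w))"
      by (simp add: power2_eq_square algebra_simps)
    also have "(norm (v + t *\<^sub>R w))^2 = (norm v)^2 + 2 * t * (v \<bullet> w) + t^2 * (norm w)^2"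
      by (simp add: power2_norm_eq_inner inner_add_left inner_add_right inner_commute)
        (simp add: power2_eq_square algebra_simps)
    also have "v \<bullet> (S *v v) + t * (v \<bullet> (S *v w)) + t * (w \<bullet> (S *v v)) + t^2 * (w \<bullet> (S *v w))
        - \<mu> * ((norm v)^2 + 2 * t * (v \<bullet> w) + t^2 * (norm w)^2) = 2 * t * (w \<bullet> w) + t^2 * Q"
      unfolding ww Q_def vw v \<mu>_def[symmetric] by (simp add: algebra_simps)
    finally show "0 \<le> 2 * t * (w \<bullet> w) + t^2 * Q" .
  qed
  then show ?thesis
    by (simp add: w_def \<mu>_def)
qed

lemma Min_real_eigenvalues_le_quadratic_form:
  fixes S :: "real^'n^'n"
  assumes sym: "transpose S = S"
  shows "Min (real_eigenvalues S) * (norm x)^2 \<le> x \<bullet> (S *v x)"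
proof -
  obtain v where v: "norm v = 1" and min: "\<And>y. (v \<bullet> (S *v v)) * (norm y)^2 \<le> y \<bullet> (S *v y)"
    using quadratic_form_min_attained by blast
  have "v \<noteq> 0"
    using v by auto
  then have "v \<bullet> (S *v v) \<in> real_eigenvalues S"
    using quadratic_form_minimizer_eigenvector[OF sym v min]
    unfolding real_eigenvalues_def by blast
  then have "Min (real_eigenvalues S) \<le> v \<bullet> (S *v v)"
    using finite_real_eigenvalues[OF sym] by simp
  then have "Min (real_eigenvalues S) * (norm x)^2 \<le> (v \<bullet> (S *v v)) * (norm x)^2"
    by (simp add: mult_right_mono)
  also have "\<dots> \<le> x \<bullet> (S *v x)"
    by (rule min)
  finally show ?thesis .
qed

lemma lambda_A_le_quadratic_form: "lambda_A A * (norm x)^2 \<le> x \<bullet> (A *v x)"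
proof -
  define S where "S = (1/2) *\<^sub>R (A + transpose A)"
  have "transpose S = S"
    by (simp add: S_def transpose_def vec_eq_iff add.commute)
  moreover have "x \<bullet> (S *v x) = x \<bullet> (A *v x)"
    by (simp add: S_def scaleR_matrix_vector_assoc[symmetric] matrix_vector_mult_add_rdistrib
        inner_add_right dot_lmul_matrix[symmetric] inner_commute[of x "x v* A"])
  moreover have "lambda_A A = Min (real_eigenvalues S)"
    by (simp add: lambda_A_def real_eigenvalues_def S_def)
  ultimately show ?thesis
    using Min_real_eigenvalues_le_quadratic_form by metis
qed

lemma expectation_bind_pmf_le:
  fixes h g :: "'b \<Rightarrow> real"
  assumes "finite (set_pmf p)" and "\<And>x. x \<in> set_pmf p \<Longrightarrow> finite (set_pmf (K x))"
    and "\<And>x. x \<in> set_pmf p \<Longrightarrow> measure_pmf.expectation (K x) h \<le> g x"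
  shows "measure_pmf.expectation (p \<bind> K) h \<le> measure_pmf.expectation p g"
proof -
  have "measure_pmf.expectation (p \<bind> K) h
      = measure_pmf.expectation p (\<lambda>x. measure_pmf.expectation (K x) h)"
    using assms(1,2) by (simp add: pmf_expectation_bind[of "set_pmf p"] integral_measure_pmf[of "set_pmf p"])
  also have "\<dots> \<le> measure_pmf.expectation p g"
    using assms by (intro integral_mono_AE integrable_measure_pmf_finite) (auto simp: AE_measure_pmf_iff)
  finally show ?thesis .
qed

lemma finite_set_svrg_step: "1 \<le> N \<Longrightarrow> finite (set_pmf (svrg_step \<phi> r \<gamma> s N \<alpha> tt \<theta>))"
  by (simp add: svrg_step_def)

lemma finite_set_inner_dist: "1 \<le> N \<Longrightarrow> finite (set_pmf (inner_dist \<phi> r \<gamma> s N \<alpha> tt t))"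
  by (induct t) (auto simp: finite_set_svrg_step)

lemma finite_set_svrg_epoch:
  "1 \<le> N \<Longrightarrow> 1 \<le> M \<Longrightarrow> finite (set_pmf (svrg_epoch \<phi> r \<gamma> s N \<alpha> M tt))"
  by (auto simp: svrg_epoch_def finite_set_inner_dist)

lemma finite_set_td_svrg:
  "1 \<le> N \<Longrightarrow> 1 \<le> M \<Longrightarrow> finite (set_pmf (td_svrg \<phi> r \<gamma> s N \<alpha> M th0 m))"
  by (induct m) (auto simp: finite_set_svrg_epoch)

lemma power2_norm_diff_le: "(norm (w - u :: 'a::real_inner))^2 \<le> 2 * (norm w)^2 + 2 * (norm u)^2"
proof -
  have "(norm (w - u))^2 + (norm (w + u))^2 = 2 * (norm w)^2 + 2 * (norm u)^2"
    by (simp add: power2_norm_eq_inner inner_add_left inner_add_right inner_diff_left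
        inner_diff_right inner_commute)
  then show ?thesis
    using zero_le_power2[of "norm (w + u)"] by linarith
qed

lemma power2_norm_svrg_update_le:
  fixes x u w :: "'a::real_inner"
  shows "(norm (x + (1/8) *\<^sub>R (w - u)))^2
    \<le> (norm x)^2 + 1/4 * (x \<bullet> w - x \<bullet> u) + 1/32 * ((norm u)^2 + (norm w)^2)"
proof -
  have "(norm (x + (1/8) *\<^sub>R (w - u)))^2 = (norm x)^2 + 1/4 * (x \<bullet> w - x \<bullet> u) + 1/64 * (norm (w - u))^2"
    by (simp add: power2_norm_eq_inner inner_add_left inner_add_right inner_diff_right inner_commute)
  then show ?thesis
    using power2_norm_diff_le[of w u] by simp
qed

lemma sum_power2_norm_diff_mean:
  fixes v :: "'i \<Rightarrow> 'a::real_inner"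
  assumes "(\<Sum>t\<in>T. v t) = real (card T) *\<^sub>R m"
  shows "(\<Sum>t\<in>T. (norm (v t - m))^2) = (\<Sum>t\<in>T. (norm (v t))^2) - real (card T) * (norm m)^2"
proof -
  have "(\<Sum>t\<in>T. (norm (v t - m))^2) = (\<Sum>t\<in>T. (norm (v t))^2) - 2 * ((\<Sum>t\<in>T. v t) \<bullet> m) + real (card T) * (norm m)^2"
    by (simp add: power2_norm_eq_inner inner_commute sum_subtractf sum.distrib inner_sum_right
        sum_distrib_left algebra_simps)
  then show ?thesis
    using assms by (simp add: power2_norm_eq_inner)
qed

locale balanced_td_data =
  fixes \<phi> :: "'s \<Rightarrow> real^'d" and r :: "'s \<Rightarrow> 's \<Rightarrow> real" and \<gamma> :: real
    and s :: "nat \<Rightarrow> 's" and N :: nat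
  assumes norm_feature_le_1: "\<And>x. norm (\<phi> x) \<le> 1"
    and discount_nonneg: "0 \<le> \<gamma>" and discount_less_1: "\<gamma> < 1"
    and N_pos: "1 \<le> N"
    and invertible_A_d: "invertible (A_d \<phi> \<gamma> s N)"
    and balanced: "s (N + 1) = s 1"
begin

abbreviation "A \<equiv> A_d \<phi> \<gamma> s N"
abbreviation "\<theta>star \<equiv> theta_star \<phi> r \<gamma> s N"
abbreviation "f \<equiv> f_d \<phi> r \<gamma> s N"
abbreviation \<psi> :: "nat \<Rightarrow> real^'d" where "\<psi> t \<equiv> \<phi> (s t) - \<gamma> *\<^sub>R \<phi> (s (t + 1))"

lemma sum_td_square_le: "(\<Sum>t=1..N. (\<psi> t \<bullet> y)^2) \<le> 2 * real N * (y \<bullet> (A *v y))"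
proof -
  define a where "a t = \<phi> (s t) \<bullet> y" for t
  have \<psi>_a: "\<psi> t \<bullet> y = a t - \<gamma> * a (t+1)" for t
    by (simp add: a_def inner_diff_left)
  have "real N * (y \<bullet> (A *v y)) = (\<Sum>t=1..N. (a t - \<gamma> * a (t+1)) * a t)"
    using N_pos by (simp add: A_d_mult_vec inner_sum_right \<psi>_a) (simp add: a_def inner_commute algebra_simps)
  moreover have "a (N+1) = a 1"
    unfolding a_def balanced ..
  ultimately show ?thesis
    unfolding \<psi>_a using cyclic_td_square_sum_le[of a N \<gamma>] discount_nonneg discount_less_1 by simp
qed

lemma sum_power2_norm_td_term_le:
  "(\<Sum>t=1..N. (norm ((\<psi> t \<bullet> y) *\<^sub>R \<phi> (s t)))^2) \<le> 2 * real N * (y \<bullet> (A *v y))"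
proof -
  have "(norm ((\<psi> t \<bullet> y) *\<^sub>R \<phi> (s t)))^2 \<le> (\<psi> t \<bullet> y)^2" for t
    using norm_feature_le_1[of "s t"]
    by (simp add: power_mult_distrib mult_left_le power_le_one)
  then have "(\<Sum>t=1..N. (norm ((\<psi> t \<bullet> y) *\<^sub>R \<phi> (s t)))^2) \<le> (\<Sum>t=1..N. (\<psi> t \<bullet> y)^2)"
    by (rule sum_mono)
  also have "\<dots> \<le> 2 * real N * (y \<bullet> (A *v y))"
    by (rule sum_td_square_le)
  finally show ?thesis .
qed

lemma svrg_update_minus_theta_star:
  "\<theta> + (1/8) *\<^sub>R (td_g \<phi> r \<gamma> (s i) (s (i+1)) \<theta> - td_g \<phi> r \<gamma> (s i) (s (i+1)) tt + g_bar \<phi> r \<gamma> s N tt)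
     - \<theta>star
   = (\<theta> - \<theta>star) + (1/8) *\<^sub>R (((\<psi> i \<bullet> (tt - \<theta>star)) *\<^sub>R \<phi> (s i) - A *v (tt - \<theta>star))
                               - (\<psi> i \<bullet> (\<theta> - \<theta>star)) *\<^sub>R \<phi> (s i))"
proof -
  have g_bar: "g_bar \<phi> r \<gamma> s N tt = - (A *v (tt - \<theta>star))"
    using A_d_theta_star[OF invertible_A_d]
    by (simp add: g_bar_eq matrix_vector_mult_diff_distrib)
  show ?thesis
    unfolding g_bar by (simp add: td_g_eq algebra_simps)
qed

lemma sum_power2_norm_svrg_update_le:
  "(\<Sum>i=1..N. (norm (x + (1/8) *\<^sub>R (((\<psi> i \<bullet> z) *\<^sub>R \<phi> (s i) - A *v z) - (\<psi> i \<bullet> x) *\<^sub>R \<phi> (s i))))^2)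
     \<le> real N * ((norm x)^2 - 3/16 * (x \<bullet> (A *v x)) + 1/16 * (z \<bullet> (A *v z)))"
proof -
  define u where "u i = (\<psi> i \<bullet> x) *\<^sub>R \<phi> (s i)" for i
  define w where "w i = (\<psi> i \<bullet> z) *\<^sub>R \<phi> (s i) - A *v z" for i
  have sum_A: "(\<Sum>i=1..N. (\<psi> i \<bullet> y) *\<^sub>R \<phi> (s i)) = real N *\<^sub>R (A *v y)" for y
    using N_pos by (simp add: A_d_mult_vec)
  have sum_u: "(\<Sum>i=1..N. x \<bullet> u i) = real N * (x \<bullet> (A *v x))"
    unfolding inner_sum_right[symmetric] u_def sum_A by simp
  \<comment> \<open>the control variate \<open>w\<close> has mean zero\<close>
  have "(\<Sum>i=1..N. x \<bullet> w i) = x \<bullet> (\<Sum>i=1..N. (\<psi> i \<bullet> z) *\<^sub>R \<phi> (s i)) - real N * (x \<bullet> (A *v z))"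
    by (simp add: w_def inner_diff_right sum_subtractf inner_sum_right)
  then have sum_w: "(\<Sum>i=1..N. x \<bullet> w i) = 0"
    unfolding sum_A by simp
  have sq_u: "(\<Sum>i=1..N. (norm (u i))^2) \<le> 2 * (real N * (x \<bullet> (A *v x)))"
    using sum_power2_norm_td_term_le[of x] by (simp add: u_def)
  have "(\<Sum>i=1..N. (norm (w i))^2) \<le> (\<Sum>i=1..N. (norm ((\<psi> i \<bullet> z) *\<^sub>R \<phi> (s i)))^2)"
    using sum_power2_norm_diff_mean[of "\<lambda>i. (\<psi> i \<bullet> z) *\<^sub>R \<phi> (s i)" "{1..N}" "A *v z"] sum_A[of z]
    by (simp add: w_def)
  then have sq_w: "(\<Sum>i=1..N. (norm (w i))^2) \<le> 2 * (real N * (z \<bullet> (A *v z)))"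
    using sum_power2_norm_td_term_le[of z] by simp
  have "(\<Sum>i=1..N. (norm (x + (1/8) *\<^sub>R (w i - u i)))^2)
      \<le> (\<Sum>i=1..N. (norm x)^2 + 1/4 * (x \<bullet> w i - x \<bullet> u i) + 1/32 * ((norm (u i))^2 + (norm (w i))^2))"
    by (intro sum_mono power2_norm_svrg_update_le)
  also have "\<dots> = real N * (norm x)^2 + 1/4 * ((\<Sum>i=1..N. x \<bullet> w i) - (\<Sum>i=1..N. x \<bullet> u i))
      + 1/32 * ((\<Sum>i=1..N. (norm (u i))^2) + (\<Sum>i=1..N. (norm (w i))^2))"
    by (simp add: sum.distrib sum_subtractf sum_distrib_left sum_divide_distrib[symmetric])
  also have "\<dots> \<le> real N * ((norm x)^2 - 3/16 * (x \<bullet> (A *v x)) + 1/16 * (z \<bullet> (A *v z)))"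
    unfolding sum_u sum_w using sq_u sq_w by (simp add: algebra_simps)
  finally show ?thesis
    by (simp add: u_def w_def)
qed

lemma expected_step_le:
  "measure_pmf.expectation (svrg_step \<phi> r \<gamma> s N (1/8) tt \<theta>) (\<lambda>u. (norm (u - \<theta>star))^2)
     \<le> (norm (\<theta> - \<theta>star))^2 - 3/16 * f \<theta> + 1/16 * f tt"
proof -
  have "measure_pmf.expectation (svrg_step \<phi> r \<gamma> s N (1/8) tt \<theta>) (\<lambda>u. (norm (u - \<theta>star))^2)
      = (\<Sum>i=1..N. (norm ((\<theta> - \<theta>star) + (1/8) *\<^sub>R (((\<psi> i \<bullet> (tt - \<theta>star)) *\<^sub>R \<phi> (s i)
            - A *v (tt - \<theta>star)) - (\<psi> i \<bullet> (\<theta> - \<theta>star)) *\<^sub>R \<phi> (s i))))^2) / real N"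
    using N_pos by (simp add: svrg_step_def integral_pmf_of_set svrg_update_minus_theta_star del: One_nat_def)
  also have "\<dots> \<le> (norm (\<theta> - \<theta>star))^2 - 3/16 * f \<theta> + 1/16 * f tt"
    using sum_power2_norm_svrg_update_le[of "\<theta> - \<theta>star" "tt - \<theta>star"] N_pos
    by (simp add: f_d_def pos_divide_le_eq mult.commute)
  finally show ?thesis .
qed

lemma expected_inner_le:
  "measure_pmf.expectation (inner_dist \<phi> r \<gamma> s N (1/8) tt t) (\<lambda>u. (norm (u - \<theta>star))^2)
     \<le> (norm (tt - \<theta>star))^2
        - 3/16 * (\<Sum>k<t. measure_pmf.expectation (inner_dist \<phi> r \<gamma> s N (1/8) tt k) f)
        + real t / 16 * f tt"
proof (induction t)
  case (Suc t)
  let ?p = "inner_dist \<phi> r \<gamma> s N (1/8) tt t" and ?g = "\<lambda>u. (norm (u - \<theta>star))^2"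
  have "measure_pmf.expectation (inner_dist \<phi> r \<gamma> s N (1/8) tt (Suc t)) ?g
      \<le> measure_pmf.expectation ?p (\<lambda>\<theta>. ?g \<theta> - 3/16 * f \<theta> + 1/16 * f tt)"
    using N_pos by (simp only: inner_dist.simps)
      (intro expectation_bind_pmf_le finite_set_inner_dist finite_set_svrg_step expected_step_le)
  also have "\<dots> = measure_pmf.expectation ?p ?g - 3/16 * measure_pmf.expectation ?p f + 1/16 * f tt"
    by (simp add: integrable_measure_pmf_finite[OF finite_set_inner_dist[OF N_pos]])
  also have "\<dots> \<le> (norm (tt - \<theta>star))^2
        - 3/16 * (\<Sum>k<Suc t. measure_pmf.expectation (inner_dist \<phi> r \<gamma> s N (1/8) tt k) f)
        + real (Suc t) / 16 * f tt"
    using Suc.IH by (simp add: field_simps)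
  finally show ?case .
qed simp

lemma expected_epoch_le:
  assumes "0 < lambda_A A" and "1 \<le> M" and "16 / lambda_A A \<le> real M"
  shows "measure_pmf.expectation (svrg_epoch \<phi> r \<gamma> s N (1/8) M tt) f \<le> 2/3 * f tt"
proof -
  define S where "S = (\<Sum>k<M. measure_pmf.expectation (inner_dist \<phi> r \<gamma> s N (1/8) tt k) f)"
  define D where "D = (norm (tt - \<theta>star))^2"
  have epoch: "measure_pmf.expectation (svrg_epoch \<phi> r \<gamma> s N (1/8) M tt) f = S / real M"
    unfolding svrg_epoch_def S_def atLeast0LessThan using assms(2)
    by (subst pmf_expectation_bind_pmf_of_set)
      (auto simp: finite_set_inner_dist[OF N_pos] sum_divide_distrib field_simps lessThan_empty_iff)
  have "0 \<le> measure_pmf.expectation (inner_dist \<phi> r \<gamma> s N (1/8) tt M) (\<lambda>u. (norm (u - \<theta>star))^2)"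
    by (rule Bochner_Integration.integral_nonneg) simp
  then have S_le: "3/16 * S \<le> D + real M / 16 * f tt"
    using expected_inner_le[of tt M] unfolding S_def D_def by linarith
  have D_le: "lambda_A A * D \<le> f tt"
    using lambda_A_le_quadratic_form[of A "tt - \<theta>star"] by (simp add: f_d_def D_def)
  have "16 * D \<le> (lambda_A A * real M) * D"
    using assms(1,3) by (intro mult_right_mono) (simp_all add: D_def pos_divide_le_eq mult.commute)
  also have "\<dots> \<le> real M * f tt"
    using D_le by (simp add: mult.assoc mult.left_commute[of "lambda_A A"] mult_left_mono)
  finally have "16 * D \<le> real M * f tt" .
  with S_le have "S \<le> 2/3 * (real M * f tt)"
    by linarith
  then show ?thesis
    using assms(2) by (simp add: epoch field_simps)
qed

end

theorem corollary1:
  fixes \<phi> :: "'s::finite \<Rightarrow> real^'d"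
    and r :: "'s \<Rightarrow> 's \<Rightarrow> real"
    and \<gamma> \<alpha> :: real
    and s :: "nat \<Rightarrow> 's"
    and N M :: nat
    and th0 :: "real^'d"
  assumes "\<And>x. norm (\<phi> x) \<le> 1"
    and "0 \<le> \<gamma>" and "\<gamma> < 1"
    and "N \<ge> 1"
    and "invertible (A_d \<phi> \<gamma> s N)"
    and "lambda_A (A_d \<phi> \<gamma> s N) > 0"
    and "s (N + 1) = s 1"
    and "\<alpha> = 1/8"
    and "M \<ge> 1"
    and "real M \<ge> 16 / lambda_A (A_d \<phi> \<gamma> s N)"
  shows "\<forall>m. measure_pmf.expectation (td_svrg \<phi> r \<gamma> s N \<alpha> M th0 m) (f_d \<phi> r \<gamma> s N)
           \<le> (2/3) ^ m * f_d \<phi> r \<gamma> s N th0"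
proof
  fix m
  interpret balanced_td_data \<phi> r \<gamma> s N
    using assms by unfold_locales auto
  show "measure_pmf.expectation (td_svrg \<phi> r \<gamma> s N \<alpha> M th0 m) f \<le> (2/3) ^ m * f th0"
    unfolding \<open>\<alpha> = 1/8\<close>
  proof (induction m)
    case (Suc m)
    let ?p = "td_svrg \<phi> r \<gamma> s N (1/8) M th0 m"
    have "measure_pmf.expectation (td_svrg \<phi> r \<gamma> s N (1/8) M th0 (Suc m)) f
        \<le> measure_pmf.expectation ?p (\<lambda>\<theta>. 2/3 * f \<theta>)"
      using N_pos assms(6,9,10) by (simp only: td_svrg.simps)
        (intro expectation_bind_pmf_le finite_set_td_svrg finite_set_svrg_epoch expected_epoch_le)
    also have "\<dots> \<le> (2/3) ^ Suc m * f th0"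
      using Suc.IH by simp
    finally show ?case .
  qed simp
qed

end
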